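(* Let $s$ be a positive integer, let $0<\varepsilon<1$, and let $A,B\subseteq[s]$. Put $\alpha=|B|/s$. Then there exist at least \[ \frac{\varepsilon}{1-(1-\varepsilon)\alpha}\,\alpha s \] elements $x\in[s]$ such that $|(A+x)\cap B|\ge(1-\varepsilon)\alpha|A|$.
   Context: $[s]=\{1,\dots,s\}$. For $A\subseteq[s]$ and an integer $x$, $A+x$ denotes the cyclic shift of $A$ within $[s]$ by $x$, i.e. $A+x=\{((a-1+x)\bmod s)+1 : a\in A\}$. *)

theory Defs
  imports Main Complex_Main
begin

definition cshift :: "nat \<Rightarrow> int set \<Rightarrow> int \<Rightarrow> int set" where
  "cshift s A x = (\<lambda>a. ((a - 1 + x) mod int s) + 1) ` A"

end

theory Submission
  imports Defs
begin

text \<open>Every a \<in> A lands in B under exactly |B| of the s shifts, so the overlaps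
  |(A + x) \<inter> B| sum to |A| |B| over x \<in> [s]; that is, their average is \<alpha> |A|.
  Since each overlap is at most |A|, an averaging (reverse Markov) argument shows that
  the number g of shifts with overlap at least (1 - \<epsilon>) \<alpha> |A| satisfies
  \<alpha> s |A| \<le> g |A| + (s - g) (1 - \<epsilon>) \<alpha> |A|, i.e. g (1 - (1 - \<epsilon>) \<alpha>) \<ge> \<epsilon> \<alpha> s.\<close>

lemma bij_betw_cyclic_shift:
  assumes "s > 0"
  shows "bij_betw (\<lambda>x::int. (c + x) mod int s + 1) {1..int s} {1..int s}"
proof -
  let ?f = "\<lambda>x::int. (c + x) mod int s + 1"
  have "inj_on ?f {1..int s}"
  proof (rule inj_onI)
    fix x y assume x: "x \<in> {1..int s}" and y: "y \<in> {1..int s}" and "?f x = ?f y"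
    then have "int s dvd (c + x) - (c + y)" by (simp add: mod_eq_dvd_iff)
    then have "int s dvd x - y" by simp
    moreover have "\<bar>x - y\<bar> < int s" using x y by auto
    ultimately show "x = y"
      by (metis abs_of_nat dvd_imp_le_int eq_iff_diff_eq_0 not_le)
  qed
  moreover have "(c + x) mod int s < int s" for x using assms by simp
  then have "?f ` {1..int s} \<subseteq> {1..int s}" using assms by (auto simp: add1_zle_eq)
  ultimately show ?thesis by (simp add: bij_betw_def endo_inj_surj)
qed

lemma card_image_Int:
  assumes "inj_on f S"
  shows "card (f ` S \<inter> B) = card {x \<in> S. f x \<in> B}"
proof -
  have "f ` S \<inter> B = f ` {x \<in> S. f x \<in> B}" by auto
  moreover have "inj_on f {x \<in> S. f x \<in> B}" using assms by (rule inj_on_subset) auto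
  ultimately show ?thesis by (simp add: card_image)
qed

lemma sum_card_cshift_Int:
  assumes "s > 0" and "A \<subseteq> {1..int s}" and "B \<subseteq> {1..int s}"
  shows "(\<Sum>x\<in>{1..int s}. card (cshift s A x \<inter> B)) = card A * card B"
proof -
  define shift where "shift a x = (a - 1 + x) mod int s + 1" for a x
  have finite_A: "finite A" using assms(2) finite_subset by blast
  have "card (cshift s A x \<inter> B) = card {a \<in> A. shift a x \<in> B}" for x
  proof -
    have "(\<lambda>a. shift a x) = (\<lambda>a. (x - 1 + a) mod int s + 1)"
      by (simp add: shift_def fun_eq_iff algebra_simps)
    then have "bij_betw (\<lambda>a. shift a x) {1..int s} {1..int s}"
      using bij_betw_cyclic_shift[OF assms(1)] by metis
    then have "inj_on (\<lambda>a. shift a x) A"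
      by (rule inj_on_subset[OF bij_betw_imp_inj_on assms(2)])
    moreover have "cshift s A x = (\<lambda>a. shift a x) ` A" by (simp add: cshift_def shift_def)
    ultimately show ?thesis by (simp add: card_image_Int)
  qed
  moreover have "card {x \<in> {1..int s}. shift a x \<in> B} = card B" for a
  proof -
    have "bij_betw (shift a) {1..int s} {1..int s}"
      using bij_betw_cyclic_shift[OF assms(1), of "a - 1"] by (simp add: shift_def[abs_def])
    then show ?thesis
      using card_image_Int[of "shift a" "{1..int s}" B] assms(3)
      by (simp add: bij_betw_def Int_absorb1)
  qed
  moreover have "(\<Sum>x\<in>{1..int s}. card {a \<in> A. shift a x \<in> B})
      = (\<Sum>a\<in>A. card {x \<in> {1..int s}. shift a x \<in> B})"
    using sum.swap_restrict[OF finite_A, of "{1..int s}" "\<lambda>_ _. 1::nat"] by simp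
  ultimately show ?thesis by simp
qed

lemma card_cshift_Int_le:
  assumes "finite A"
  shows "card (cshift s A x \<inter> B) \<le> card A"
proof -
  have "card (cshift s A x \<inter> B) \<le> card (cshift s A x)"
    using assms by (simp add: cshift_def card_mono)
  also have "\<dots> \<le> card A" unfolding cshift_def using assms by (rule card_image_le)
  finally show ?thesis .
qed

lemma sum_le_card_above_threshold:
  fixes c :: "'a \<Rightarrow> real"
  assumes "finite S" and "\<And>x. x \<in> S \<Longrightarrow> c x \<le> M"
  shows "(\<Sum>x\<in>S. c x) \<le> real (card {x \<in> S. \<theta> \<le> c x}) * (M - \<theta>) + real (card S) * \<theta>"
proof -
  let ?G = "{x \<in> S. \<theta> \<le> c x}"
  have "(\<Sum>x\<in>S. c x) = (\<Sum>x\<in>?G. c x) + (\<Sum>x\<in>S - ?G. c x)"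
    using sum.subset_diff[of ?G S c] assms(1) by (simp add: add.commute)
  also have "\<dots> \<le> (\<Sum>x\<in>?G. M) + (\<Sum>x\<in>S - ?G. \<theta>)"
    using assms(2) by (intro add_mono sum_mono) auto
  also have "\<dots> = real (card ?G) * M + (real (card S) - real (card ?G)) * \<theta>"
    using assms(1) by (simp add: card_Diff_subset card_mono of_nat_diff)
  finally show ?thesis by (simp add: algebra_simps)
qed

theorem proposition1:
  fixes s :: nat and \<epsilon> :: real and A B :: "int set"
  assumes "s > 0" and "0 < \<epsilon>" and "\<epsilon> < 1"
    and "A \<subseteq> {1..int s}" and "B \<subseteq> {1..int s}"
  defines "\<alpha> \<equiv> real (card B) / real s"
  shows "real (card {x \<in> {1..int s}. real (card (cshift s A x \<inter> B)) \<ge> (1 - \<epsilon>) * \<alpha> * real (card A)})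
           \<ge> \<epsilon> / (1 - (1 - \<epsilon>) * \<alpha>) * \<alpha> * real s"
proof -
  define overlap where "overlap x = real (card (cshift s A x \<inter> B))" for x
  define \<theta> where "\<theta> = (1 - \<epsilon>) * \<alpha> * real (card A)"
  define g where "g = real (card {x \<in> {1..int s}. \<theta> \<le> overlap x})"
  have \<alpha>_le_1: "\<alpha> \<le> 1"
    using card_mono[OF _ assms(5)] assms(1) by (simp add: \<alpha>_def)
  have overlap_le: "overlap x \<le> real (card A)" for x
    using card_cshift_Int_le[OF finite_subset[OF assms(4)]] by (simp add: overlap_def)
  have "(\<Sum>x\<in>{1..int s}. overlap x) = real (card A) * (\<alpha> * real s)"
    using sum_card_cshift_Int[OF assms(1,4,5)] assms(1)
    by (simp add: overlap_def \<alpha>_def flip: of_nat_sum)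
  then have "real (card A) * (\<alpha> * real s) \<le> g * (real (card A) - \<theta>) + real s * \<theta>"
    using sum_le_card_above_threshold[of "{1..int s}" overlap, OF _ overlap_le] by (simp add: g_def)
  then have "real (card A) * (\<epsilon> * \<alpha> * real s) \<le> real (card A) * (g * (1 - (1 - \<epsilon>) * \<alpha>))"
    by (simp add: \<theta>_def algebra_simps)
  then have "\<epsilon> * \<alpha> * real s \<le> g * (1 - (1 - \<epsilon>) * \<alpha>)"
  proof (cases "card A = 0")
    case True
    then have "{x \<in> {1..int s}. \<theta> \<le> overlap x} = {1..int s}" by (auto simp: overlap_def \<theta>_def)
    then have "g = real s" by (simp add: g_def)
    moreover have "\<alpha> * real s \<le> real s" using mult_right_mono[OF \<alpha>_le_1, of "real s"] by simp
    ultimately show ?thesis by (simp add: algebra_simps)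
  qed simp
  moreover have "(1 - \<epsilon>) * \<alpha> \<le> 1 - \<epsilon>"
    using mult_left_mono[OF \<alpha>_le_1, of "1 - \<epsilon>"] assms(3) by simp
  ultimately have "\<epsilon> / (1 - (1 - \<epsilon>) * \<alpha>) * \<alpha> * real s \<le> g"
    using assms(2) by (simp add: pos_divide_le_eq)
  then show ?thesis by (simp add: g_def overlap_def \<theta>_def)
qed

end
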